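(* Let $p\ge3$. Let $m,s,n,j$ be integers and $E$ a real number. If $0\le m<n$, $0\le s<n$, $1<E$, and $|j|>p^{En}$, then $l_\Gamma(t^{-m}a^jt^s)>(E-1)n$.
   Context: $G=BS(1,p)=\langle a,t\mid tat^{-1}=a^p\rangle$ with generating set $\{a^{\pm1},t^{\pm1}\}$; for a word $v$, $l_\Gamma(v)$ denotes the word length (length of a geodesic representative in the Cayley graph) of the element of $G$ represented by $v$. *)

theory Defs
  imports Complex_Main
begin

text \<open>The Baumslag--Solitar group BS(1,p) = < a, t | t a t^-1 = a^p >, realised faithfully
  as the group of affine maps x |-> p^k * x + b of the rationals (k :: int, b in Z[1/p]),
  with a = (x |-> x + 1) and t = (x |-> p * x).  The pair (k, b) stands for x |-> p^k x + b,
  and multiplication is composition of maps.\<close>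

type_synonym bs_elt = "int \<times> rat"

definition bs_mult :: "nat \<Rightarrow> bs_elt \<Rightarrow> bs_elt \<Rightarrow> bs_elt" where
  "bs_mult p g h = (fst g + fst h, (of_nat p) powi (fst g) * snd h + snd g)"

definition bs_one :: bs_elt where "bs_one = (0, 0)"

datatype gen = A | A_inv | T | T_inv

fun gen_elt :: "nat \<Rightarrow> gen \<Rightarrow> bs_elt" where
  "gen_elt p A = (0, 1)"
| "gen_elt p A_inv = (0, -1)"
| "gen_elt p T = (1, 0)"
| "gen_elt p T_inv = (-1, 0)"

definition eval_word :: "nat \<Rightarrow> gen list \<Rightarrow> bs_elt" where
  "eval_word p w = foldr (\<lambda>x acc. bs_mult p (gen_elt p x) acc) w bs_one"

definition word_length :: "nat \<Rightarrow> bs_elt \<Rightarrow> nat" where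
  "word_length p g = (LEAST n. \<exists>w. length w = n \<and> eval_word p w = g)"

definition l_Gamma :: "nat \<Rightarrow> gen list \<Rightarrow> nat" where
  "l_Gamma p v = word_length p (eval_word p v)"

definition a_pow_word :: "int \<Rightarrow> gen list" where
  "a_pow_word j = (if 0 \<le> j then replicate (nat j) A else replicate (nat (- j)) A_inv)"

definition tat_word :: "int \<Rightarrow> int \<Rightarrow> int \<Rightarrow> gen list" where
  "tat_word m j s = replicate (nat m) T_inv @ a_pow_word j @ replicate (nat s) T"

end

theory Submission
  imports Defs
begin

text \<open>Read as an affine map x \<mapsto> p^k x + b, a generator moves the translation part b by at most
  a factor p (for b \<ge> 1 in absolute value), so every element of word length l has |b| \<le> p^l.
  The element t^-m a^j t^s is x \<mapsto> x + j/p^m, whence |j| \<le> p^(l+m) < p^(l+n); together with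
  |j| > p^(E n) this forces l > (E - 1) n.\<close>

lemma eval_word_Cons: "eval_word p (x # w) = bs_mult p (gen_elt p x) (eval_word p w)"
  by (simp add: eval_word_def)

lemma abs_snd_gen_mult_le:
  assumes "p \<ge> 2" and "1 \<le> c" and "\<bar>snd g\<bar> \<le> c"
  shows "\<bar>snd (bs_mult p (gen_elt p x) g)\<bar> \<le> of_nat p * c"
proof -
  have p2: "(2::rat) \<le> of_nat p" using assms(1) by simp
  have "2 * c \<le> of_nat p * c" using assms(2) p2 by (intro mult_right_mono) auto
  then have grow: "\<bar>snd g\<bar> + 1 \<le> of_nat p * c" using assms(2,3) by linarith
  show ?thesis
  proof (cases x)
    case A
    then show ?thesis using grow by (simp add: bs_mult_def)
  next
    case A_inv
    then show ?thesis using grow by (simp add: bs_mult_def)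
  next
    case T
    then show ?thesis using assms(3) p2 by (simp add: bs_mult_def abs_mult mult_left_mono)
  next
    case T_inv
    have "\<bar>snd g\<bar> / of_nat p \<le> \<bar>snd g\<bar>" using p2 by (simp add: divide_le_eq mult_le_cancel_left1)
    then show ?thesis using T_inv grow
      by (simp add: bs_mult_def power_int_minus field_simps)
  qed
qed

lemma abs_snd_eval_word_le:
  assumes "p \<ge> 2"
  shows "\<bar>snd (eval_word p w)\<bar> \<le> (of_nat p :: rat) ^ length w"
proof (induction w)
  case Nil
  then show ?case by (simp add: eval_word_def bs_one_def)
next
  case (Cons x w)
  have "(1::rat) \<le> of_nat p ^ length w" using assms by simp
  with Cons.IH show ?case
    using abs_snd_gen_mult_le[OF assms] by (simp add: eval_word_Cons)
qed

lemma word_length_attained: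
  obtains w where "length w = l_Gamma p v" "eval_word p w = eval_word p v"
proof -
  have "\<exists>n w. length w = n \<and> eval_word p w = eval_word p v" by blast
  from LeastI_ex[OF this] show ?thesis
    using that by (auto simp: l_Gamma_def word_length_def)
qed

lemma abs_snd_eval_word_le_l_Gamma:
  assumes "p \<ge> 2"
  shows "\<bar>snd (eval_word p v)\<bar> \<le> (of_nat p :: rat) ^ l_Gamma p v"
  by (metis abs_snd_eval_word_le[OF assms] word_length_attained)

lemma eval_word_T_inv_prefix:
  "eval_word p (replicate k T_inv @ w)
     = (fst (eval_word p w) - int k, snd (eval_word p w) / of_nat p ^ k)"
  by (induction k) (simp_all add: eval_word_Cons bs_mult_def power_int_minus divide_inverse)

lemma snd_eval_word_a_pow_word:
  "snd (eval_word p (a_pow_word j @ replicate k T)) = of_int j"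
proof -
  have "snd (eval_word p (replicate k T)) = 0"
    by (induction k) (simp_all add: eval_word_Cons bs_mult_def eval_word_def bs_one_def)
  moreover have "snd (eval_word p (replicate i A @ w)) = snd (eval_word p w) + of_nat i"
    and "snd (eval_word p (replicate i A_inv @ w)) = snd (eval_word p w) - of_nat i" for i w
    by (induction i) (simp_all add: eval_word_Cons bs_mult_def)
  ultimately show ?thesis by (simp add: a_pow_word_def)
qed

lemma snd_eval_tat_word:
  "snd (eval_word p (tat_word m j s)) = of_int j / of_nat p ^ nat m"
  by (simp add: tat_word_def eval_word_T_inv_prefix snd_eval_word_a_pow_word)

lemma abs_le_power_l_Gamma_tat_word:
  assumes "p \<ge> 2"
  shows "\<bar>j\<bar> \<le> int p ^ (l_Gamma p (tat_word m j s) + nat m)"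
proof -
  have "\<bar>of_int j\<bar> / (of_nat p :: rat) ^ nat m \<le> of_nat p ^ l_Gamma p (tat_word m j s)"
    using abs_snd_eval_word_le_l_Gamma[OF assms, of "tat_word m j s"]
    by (simp add: snd_eval_tat_word)
  then have "\<bar>of_int j\<bar> \<le> (of_nat p :: rat) ^ (l_Gamma p (tat_word m j s) + nat m)"
    using assms by (simp add: divide_le_eq power_add)
  then show ?thesis
    by (metis of_int_abs of_int_le_iff of_int_of_nat_eq of_int_power)
qed

theorem lemma6p4:
  fixes p :: nat and m s n j :: int and E :: real
  assumes "p \<ge> 3"
    and "0 \<le> m" "m < n" "0 \<le> s" "s < n" "1 < E"
    and "real_of_int \<bar>j\<bar> > real p powr (E * real_of_int n)"
  shows "real (l_Gamma p (tat_word m j s)) > (E - 1) * real_of_int n"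
proof -
  define l where "l = l_Gamma p (tat_word m j s)"
  have "\<bar>j\<bar> \<le> int p ^ (l + nat m)"
    using abs_le_power_l_Gamma_tat_word[of p j m s] assms(1) by (simp add: l_def)
  then have "real_of_int \<bar>j\<bar> \<le> real p ^ (l + nat m)"
    by (metis of_int_le_iff of_int_of_nat_eq of_int_power)
  also have "\<dots> = real p powr real (l + nat m)"
    using assms(1) by (subst powr_realpow) auto
  also have "real (l + nat m) = real l + real_of_int m"
    using assms(2) by simp
  finally have "real p powr (E * real_of_int n) < real p powr (real l + real_of_int m)"
    using assms(7) by linarith
  then have "E * real_of_int n < real l + real_of_int m"
    using assms(1) by simp
  then show ?thesis
    using assms(3) by (simp add: l_def algebra_simps)
qed

end
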